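(* Let $X$ and $Y$ be independent random variables such that, for the same $D>0$ and $\sigma^2>0$, $\mathbb{P}(|X|\ge x)\le De^{-x^2/(2\sigma^2)}$ and $\mathbb{P}(|Y|\ge x)\le De^{-x^2/(2\sigma^2)}$ for every $x>0$. Then for every $z>0$ and $k>0$, $$\mathbb{P}(X+Y\ge z)\le\big(1+D\sqrt{k/e}\sqrt{2\pi}\big)^2e^{-\frac{z^2}{4(1+1/k)\sigma^2}}.$$ *)

theory Defs
  imports "HOL-Probability.Probability"
begin

end

theory Submission
  imports Defs
begin

text \<open>By Chernoff's bound, \<open>P(X + Y \<ge> z) \<le> e^(-tz) E e^(tX) E e^(tY)\<close>, the expectations
  factorising by independence. Integrating \<open>e^(tx) \<le> 1 + \<integral>\<^sub>0\<^sup>x t e^(ts) ds\<close> against the law of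
  \<open>X\<close> and exchanging the integrals turns the Gaussian tail into
  \<open>E e^(tX) \<le> 1 + D t sqrt(2 \<pi> \<sigma>2) e^(\<sigma>2 t^2/2)\<close>. The linear factor \<open>y = t sqrt \<sigma>2\<close> is absorbed
  by \<open>y \<le> sqrt(k/e) e^(y^2/(2k))\<close> (which is \<open>u \<le> e^(u-1)\<close>), at the cost of replacing \<open>\<sigma>2\<close> by
  \<open>(1 + 1/k) \<sigma>2\<close>; the optimal \<open>t = z / (2 (1 + 1/k) \<sigma>2)\<close> then gives the claim.\<close>

lemma nn_integral_exp_derivative_Icc:
  fixes t x :: real
  assumes "t \<ge> 0" "x \<ge> 0"
  shows "(\<integral>\<^sup>+s. ennreal (t * exp (t * s)) * indicator {0..x} s \<partial>lborel) = ennreal (exp (t * x) - 1)"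
proof -
  have "((\<lambda>s. t * exp (t * s)) has_integral (exp (t * x) - exp (t * 0))) {0..x}"
    using assms(2)
    by (intro fundamental_theorem_of_calculus)
       (auto intro!: derivative_eq_intros simp flip: has_real_derivative_iff_has_vector_derivative)
  then show ?thesis
    using assms by (intro nn_integral_has_integral_lebesgue') auto
qed

lemma exp_le_one_plus_nn_integral:
  fixes t x :: real
  assumes "t \<ge> 0"
  shows "ennreal (exp (t * x)) \<le> 1 + (\<integral>\<^sup>+s. ennreal (t * exp (t * s)) * indicator {0..x} s \<partial>lborel)"
proof (cases "x \<ge> 0")
  case True
  have "1 \<le> exp (t * x)"
    using assms True by simp
  then have "ennreal (exp (t * x)) = ennreal 1 + ennreal (exp (t * x) - 1)"
    by (subst ennreal_plus[symmetric]) auto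
  then show ?thesis
    using nn_integral_exp_derivative_Icc[OF assms True] by simp
next
  case False
  then have "ennreal (exp (t * x)) \<le> 1"
    using assms by (simp add: ennreal_le_1 mult_nonneg_nonpos)
  then show ?thesis
    by (meson add_increasing2 order_trans zero_le)
qed

lemma (in prob_space) nn_integral_exp_le_one_plus_tail_integral:
  fixes X :: "'a \<Rightarrow> real" and g :: "real \<Rightarrow> ennreal"
  assumes [measurable]: "X \<in> borel_measurable M" and "t \<ge> 0"
    and tail: "\<And>s. s > 0 \<Longrightarrow> emeasure M {\<omega> \<in> space M. X \<omega> \<ge> s} \<le> g s"
  shows "(\<integral>\<^sup>+\<omega>. exp (t * X \<omega>) \<partial>M) \<le> 1 + (\<integral>\<^sup>+s. ennreal (t * exp (t * s)) * g s \<partial>lborel)"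
proof -
  interpret pair_sigma_finite M lborel by unfold_locales
  define F where "F \<omega> s = ennreal (t * exp (t * s)) * indicator {0..X \<omega>} s" for \<omega> s
  have F_measurable: "case_prod F \<in> borel_measurable (M \<Otimes>\<^sub>M lborel)"
  proof -
    have "F = (\<lambda>\<omega> s. ennreal (t * exp (t * s)) * (if 0 \<le> s \<and> s \<le> X \<omega> then 1 else 0))"
      by (auto simp: F_def indicator_def fun_eq_iff)
    then show ?thesis
      by simp
  qed
  have tail_integrand: "AE s in lborel. (\<integral>\<^sup>+\<omega>. F \<omega> s \<partial>M) \<le> ennreal (t * exp (t * s)) * g s"
    using AE_lborel_singleton[of 0]
  proof eventually_elim
    case (elim s)
    show ?case
    proof (cases "s > 0")
      case True
      have "(\<integral>\<^sup>+\<omega>. F \<omega> s \<partial>M)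
          = (\<integral>\<^sup>+\<omega>. ennreal (t * exp (t * s)) * indicator {\<omega> \<in> space M. X \<omega> \<ge> s} \<omega> \<partial>M)"
        using True by (intro nn_integral_cong) (auto simp: F_def indicator_def)
      also have "\<dots> = ennreal (t * exp (t * s)) * emeasure M {\<omega> \<in> space M. X \<omega> \<ge> s}"
        by (rule nn_integral_cmult_indicator) measurable
      also have "\<dots> \<le> ennreal (t * exp (t * s)) * g s"
        using tail[OF True] by (rule mult_left_mono) simp
      finally show ?thesis .
    next
      case False
      then have "F \<omega> s = 0" for \<omega>
        using elim by (simp add: F_def)
      then show ?thesis
        by simp
    qed
  qed
  have "(\<integral>\<^sup>+\<omega>. exp (t * X \<omega>) \<partial>M) \<le> (\<integral>\<^sup>+\<omega>. 1 + (\<integral>\<^sup>+s. F \<omega> s \<partial>lborel) \<partial>M)"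
    unfolding F_def using \<open>t \<ge> 0\<close> by (intro nn_integral_mono exp_le_one_plus_nn_integral)
  also have "\<dots> = 1 + (\<integral>\<^sup>+\<omega>. (\<integral>\<^sup>+s. F \<omega> s \<partial>lborel) \<partial>M)"
    using sigma_finite_measure.borel_measurable_nn_integral[OF sigma_finite_lborel F_measurable]
    by (subst nn_integral_add) (auto simp: emeasure_space_1)
  also have "(\<integral>\<^sup>+\<omega>. (\<integral>\<^sup>+s. F \<omega> s \<partial>lborel) \<partial>M) = (\<integral>\<^sup>+s. (\<integral>\<^sup>+\<omega>. F \<omega> s \<partial>M) \<partial>lborel)"
    using Fubini'[OF F_measurable] by simp
  also have "\<dots> \<le> (\<integral>\<^sup>+s. ennreal (t * exp (t * s)) * g s \<partial>lborel)"
    using tail_integrand by (rule nn_integral_mono_AE)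
  finally show ?thesis
    by (simp add: add_left_mono)
qed

lemma nn_integral_exp_mult_gaussian:
  fixes t v :: real
  assumes "v > 0"
  shows "(\<integral>\<^sup>+s. exp (t * s) * exp (- s\<^sup>2 / (2 * v)) \<partial>lborel) = sqrt (2 * pi * v) * exp (v * t\<^sup>2 / 2)"
proof -
  define c where "c = sqrt (2 * pi * v) * exp (v * t\<^sup>2 / 2)"
  have "c \<ge> 0"
    using assms by (simp add: c_def)
  have completed_square: "exp (t * s) * exp (- s\<^sup>2 / (2 * v)) = c * normal_density (v * t) (sqrt v) s" for s
  proof -
    have "exp (t * s) * exp (- s\<^sup>2 / (2 * v)) = exp (v * t\<^sup>2 / 2) * exp (- (s - v * t)\<^sup>2 / (2 * v))"
      unfolding exp_add[symmetric] using assms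
      by (intro arg_cong[where f = exp]) (simp add: field_simps power2_eq_square)
    then show ?thesis
      using assms by (simp add: c_def normal_density_def real_sqrt_mult)
  qed
  have "(\<integral>\<^sup>+s. c * normal_density (v * t) (sqrt v) s \<partial>lborel)
      = c * (\<integral>\<^sup>+s. normal_density (v * t) (sqrt v) s \<partial>lborel)"
    using \<open>c \<ge> 0\<close> by (simp add: ennreal_mult nn_integral_cmult)
  also have "(\<integral>\<^sup>+s. normal_density (v * t) (sqrt v) s \<partial>lborel) = 1"
    using assms by (subst nn_integral_eq_integral) auto
  finally show ?thesis
    unfolding completed_square c_def by simp
qed

lemma (in prob_space) subgaussian_tail_imp_mgf_le:
  fixes X :: "'a \<Rightarrow> real"
  assumes [measurable]: "X \<in> borel_measurable M"
    and "D \<ge> 0" "\<sigma>2 > 0" "t \<ge> 0"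
    and tail: "\<And>x. x > 0 \<Longrightarrow> prob {\<omega> \<in> space M. \<bar>X \<omega>\<bar> \<ge> x} \<le> D * exp (- x\<^sup>2 / (2 * \<sigma>2))"
  shows "(\<integral>\<^sup>+\<omega>. exp (t * X \<omega>) \<partial>M) \<le> 1 + D * t * sqrt (2 * pi * \<sigma>2) * exp (\<sigma>2 * t\<^sup>2 / 2)"
proof -
  have "emeasure M {\<omega> \<in> space M. X \<omega> \<ge> s} \<le> D * exp (- s\<^sup>2 / (2 * \<sigma>2))" if "s > 0" for s
  proof -
    have "emeasure M {\<omega> \<in> space M. X \<omega> \<ge> s} \<le> emeasure M {\<omega> \<in> space M. \<bar>X \<omega>\<bar> \<ge> s}"
      by (intro emeasure_mono) auto
    also have "\<dots> \<le> D * exp (- s\<^sup>2 / (2 * \<sigma>2))"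
      using tail[OF that] by (simp add: emeasure_eq_measure ennreal_leI)
    finally show ?thesis .
  qed
  then have "(\<integral>\<^sup>+\<omega>. exp (t * X \<omega>) \<partial>M)
      \<le> 1 + (\<integral>\<^sup>+s. ennreal (t * exp (t * s)) * (D * exp (- s\<^sup>2 / (2 * \<sigma>2))) \<partial>lborel)"
    using \<open>t \<ge> 0\<close> by (intro nn_integral_exp_le_one_plus_tail_integral) auto
  also have "(\<integral>\<^sup>+s. ennreal (t * exp (t * s)) * (D * exp (- s\<^sup>2 / (2 * \<sigma>2))) \<partial>lborel)
      = ennreal (D * t) * (\<integral>\<^sup>+s. exp (t * s) * exp (- s\<^sup>2 / (2 * \<sigma>2)) \<partial>lborel)"
    using assms by (subst nn_integral_cmult[symmetric]) (auto simp: ennreal_mult' [symmetric] mult_ac)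
  also have "\<dots> = ennreal (D * t) * ennreal (sqrt (2 * pi * \<sigma>2) * exp (\<sigma>2 * t\<^sup>2 / 2))"
    by (simp only: nn_integral_exp_mult_gaussian[OF \<open>\<sigma>2 > 0\<close>])
  also have "\<dots> = D * t * sqrt (2 * pi * \<sigma>2) * exp (\<sigma>2 * t\<^sup>2 / 2)"
    using assms by (subst ennreal_mult[symmetric]) (auto simp: mult.assoc)
  finally show ?thesis
    using assms by (simp add: ennreal_plus[of 1, simplified])
qed

lemma le_sqrt_div_exp_mult_exp_square:
  fixes y k :: real
  assumes "k > 0"
  shows "y \<le> sqrt (k / exp 1) * exp (y\<^sup>2 / (2 * k))"
proof (cases "y \<le> 0")
  case True
  moreover have "0 \<le> sqrt (k / exp 1) * exp (y\<^sup>2 / (2 * k))"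
    using assms by simp
  ultimately show ?thesis
    by linarith
next
  case False
  have "y\<^sup>2 / k \<le> exp (y\<^sup>2 / k - 1)"
    using exp_ge_add_one_self[of "y\<^sup>2 / k - 1"] by simp
  also have "exp (y\<^sup>2 / k - 1) = (exp (y\<^sup>2 / (2 * k)))\<^sup>2 / exp 1"
    by (simp add: exp_diff power2_eq_square flip: exp_add)
  finally have "y\<^sup>2 \<le> (sqrt (k / exp 1) * exp (y\<^sup>2 / (2 * k)))\<^sup>2"
    using assms by (simp add: power_mult_distrib field_simps)
  then show ?thesis
    by (rule power2_le_imp_le) (use assms in simp)
qed

lemma one_plus_gaussian_mgf_le:
  fixes D \<sigma>2 t k :: real
  assumes "D \<ge> 0" "\<sigma>2 \<ge> 0" "k > 0"
  shows "1 + D * t * sqrt (2 * pi * \<sigma>2) * exp (\<sigma>2 * t\<^sup>2 / 2)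
     \<le> (1 + D * sqrt (k / exp 1) * sqrt (2 * pi)) * exp ((1 + 1 / k) * \<sigma>2 * t\<^sup>2 / 2)"
proof -
  define y where "y = t * sqrt \<sigma>2"
  have y_square: "y\<^sup>2 = \<sigma>2 * t\<^sup>2"
    using assms by (simp add: y_def power_mult_distrib)
  have exp_split: "exp ((1 + 1 / k) * \<sigma>2 * t\<^sup>2 / 2) = exp (y\<^sup>2 / (2 * k)) * exp (\<sigma>2 * t\<^sup>2 / 2)"
    using assms by (simp add: y_square field_simps flip: exp_add)
  have "D * t * sqrt (2 * pi * \<sigma>2) * exp (\<sigma>2 * t\<^sup>2 / 2) = D * sqrt (2 * pi) * y * exp (\<sigma>2 * t\<^sup>2 / 2)"
    by (simp add: y_def real_sqrt_mult)
  also have "\<dots> \<le> D * sqrt (2 * pi) * (sqrt (k / exp 1) * exp (y\<^sup>2 / (2 * k))) * exp (\<sigma>2 * t\<^sup>2 / 2)"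
    using assms le_sqrt_div_exp_mult_exp_square[of k y] by (intro mult_right_mono mult_left_mono) auto
  also have "\<dots> = D * sqrt (k / exp 1) * sqrt (2 * pi) * exp ((1 + 1 / k) * \<sigma>2 * t\<^sup>2 / 2)"
    unfolding exp_split by (simp add: mult_ac)
  finally have "D * t * sqrt (2 * pi * \<sigma>2) * exp (\<sigma>2 * t\<^sup>2 / 2)
      \<le> D * sqrt (k / exp 1) * sqrt (2 * pi) * exp ((1 + 1 / k) * \<sigma>2 * t\<^sup>2 / 2)" .
  moreover have "1 \<le> exp ((1 + 1 / k) * \<sigma>2 * t\<^sup>2 / 2)"
    using assms by simp
  ultimately show ?thesis
    unfolding distrib_right mult_1_left by linarith
qed

lemma (in prob_space) subgaussian_tail_imp_mgf_le_inflated_variance: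
  fixes X :: "'a \<Rightarrow> real"
  assumes "X \<in> borel_measurable M"
    and "D \<ge> 0" "\<sigma>2 > 0" "t \<ge> 0" "k > 0"
    and "\<And>x. x > 0 \<Longrightarrow> prob {\<omega> \<in> space M. \<bar>X \<omega>\<bar> \<ge> x} \<le> D * exp (- x\<^sup>2 / (2 * \<sigma>2))"
  shows "(\<integral>\<^sup>+\<omega>. exp (t * X \<omega>) \<partial>M)
    \<le> (1 + D * sqrt (k / exp 1) * sqrt (2 * pi)) * exp ((1 + 1 / k) * \<sigma>2 * t\<^sup>2 / 2)"
  using subgaussian_tail_imp_mgf_le[OF assms(1-4,6)] one_plus_gaussian_mgf_le[of D \<sigma>2 k t] assms(2,3,5)
  by (meson ennreal_leI less_imp_le order_trans)

lemma (in prob_space) indep_var_nn_integral_mult: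
  fixes f g :: "'b \<Rightarrow> ennreal"
  assumes "indep_var N1 X N2 Y" "f \<in> borel_measurable N1" "g \<in> borel_measurable N2"
  shows "(\<integral>\<^sup>+\<omega>. f (X \<omega>) * g (Y \<omega>) \<partial>M) = (\<integral>\<^sup>+\<omega>. f (X \<omega>) \<partial>M) * (\<integral>\<^sup>+\<omega>. g (Y \<omega>) \<partial>M)"
proof -
  have "indep_var borel (f \<circ> X) borel (g \<circ> Y)"
    using assms by (rule indep_var_compose)
  then have "indep_vars (\<lambda>_. borel) (case_bool (f \<circ> X) (g \<circ> Y)) UNIV"
    unfolding indep_var_def
    by (rule back_subst[where P = "\<lambda>N. indep_vars N _ UNIV"]) (auto split: bool.split)
  then have "(\<integral>\<^sup>+\<omega>. (\<Prod>i\<in>UNIV. case_bool (f \<circ> X) (g \<circ> Y) i \<omega>) \<partial>M)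
      = (\<Prod>i\<in>UNIV. \<integral>\<^sup>+\<omega>. case_bool (f \<circ> X) (g \<circ> Y) i \<omega> \<partial>M)"
    by (intro indep_vars_nn_integral) auto
  then show ?thesis
    by (simp add: UNIV_bool comp_def mult.commute)
qed

lemma (in prob_space) Chernoff_ineq_indep_add:
  fixes X Y :: "'a \<Rightarrow> real"
  assumes [measurable]: "X \<in> borel_measurable M" "Y \<in> borel_measurable M"
    and "indep_var borel X borel Y" and "t > 0"
  shows "emeasure M {\<omega> \<in> space M. X \<omega> + Y \<omega> \<ge> z}
    \<le> exp (- t * z) * ((\<integral>\<^sup>+\<omega>. exp (t * X \<omega>) \<partial>M) * (\<integral>\<^sup>+\<omega>. exp (t * Y \<omega>) \<partial>M))"
proof -
  have "emeasure M {\<omega> \<in> space M. X \<omega> + Y \<omega> \<ge> z}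
      \<le> exp (- t * z) * (\<integral>\<^sup>+\<omega>. ennreal (exp (t * (X \<omega> + Y \<omega>))) * indicator (space M) \<omega> \<partial>M)"
    using \<open>t > 0\<close> by (intro Chernoff_ineq_nn_integral_ge) auto
  also have "(\<integral>\<^sup>+\<omega>. ennreal (exp (t * (X \<omega> + Y \<omega>))) * indicator (space M) \<omega> \<partial>M)
      = (\<integral>\<^sup>+\<omega>. ennreal (exp (t * X \<omega>)) * ennreal (exp (t * Y \<omega>)) \<partial>M)"
    by (intro nn_integral_cong) (simp add: distrib_left exp_add ennreal_mult')
  also have "\<dots> = (\<integral>\<^sup>+\<omega>. exp (t * X \<omega>) \<partial>M) * (\<integral>\<^sup>+\<omega>. exp (t * Y \<omega>) \<partial>M)"
    using \<open>indep_var borel X borel Y\<close>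
    by (rule indep_var_nn_integral_mult[where f = "\<lambda>x. ennreal (exp (t * x))"]) auto
  finally show ?thesis .
qed

theorem lemmaA3:
  fixes M :: "'a measure" and X Y :: "'a \<Rightarrow> real" and D \<sigma>2 z k :: real
  assumes "prob_space M"
    and "X \<in> borel_measurable M" and "Y \<in> borel_measurable M"
    and "prob_space.indep_var M borel X borel Y"
    and "D > 0" and "\<sigma>2 > 0"
    and "\<And>x. x > 0 \<Longrightarrow> measure M {\<omega> \<in> space M. \<bar>X \<omega>\<bar> \<ge> x} \<le> D * exp (- x\<^sup>2 / (2 * \<sigma>2))"
    and "\<And>x. x > 0 \<Longrightarrow> measure M {\<omega> \<in> space M. \<bar>Y \<omega>\<bar> \<ge> x} \<le> D * exp (- x\<^sup>2 / (2 * \<sigma>2))"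
    and "z > 0" and "k > 0"
  shows "measure M {\<omega> \<in> space M. X \<omega> + Y \<omega> \<ge> z}
    \<le> (1 + D * sqrt (k / exp 1) * sqrt (2 * pi))\<^sup>2 * exp (- z\<^sup>2 / (4 * (1 + 1 / k) * \<sigma>2))"
proof -
  interpret prob_space M by fact
  define c where "c = 1 + 1 / k"
  define t where "t = z / (2 * c * \<sigma>2)"
  define B where "B = (1 + D * sqrt (k / exp 1) * sqrt (2 * pi)) * exp (c * \<sigma>2 * t\<^sup>2 / 2)"
  have "c > 0"
    using \<open>k > 0\<close> by (simp add: c_def add_pos_pos)
  then have "t > 0"
    using assms by (simp add: t_def)
  have "B \<ge> 0"
    using assms by (simp add: B_def)
  have mgf_X: "(\<integral>\<^sup>+\<omega>. exp (t * X \<omega>) \<partial>M) \<le> B" and mgf_Y: "(\<integral>\<^sup>+\<omega>. exp (t * Y \<omega>) \<partial>M) \<le> B"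
    using assms \<open>t > 0\<close> unfolding B_def c_def
    by (auto intro!: subgaussian_tail_imp_mgf_le_inflated_variance)
  have "emeasure M {\<omega> \<in> space M. X \<omega> + Y \<omega> \<ge> z}
      \<le> exp (- t * z) * ((\<integral>\<^sup>+\<omega>. exp (t * X \<omega>) \<partial>M) * (\<integral>\<^sup>+\<omega>. exp (t * Y \<omega>) \<partial>M))"
    using assms(2-4) \<open>t > 0\<close> by (rule Chernoff_ineq_indep_add)
  also have "\<dots> \<le> exp (- t * z) * (ennreal B * ennreal B)"
    using mgf_X mgf_Y by (intro mult_left_mono mult_mono) auto
  also have "\<dots> = ennreal (exp (- t * z) * B\<^sup>2)"
    using \<open>B \<ge> 0\<close> by (simp add: ennreal_mult power2_eq_square)
  also have "exp (- t * z) * B\<^sup>2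
      = (1 + D * sqrt (k / exp 1) * sqrt (2 * pi))\<^sup>2 * exp (- z\<^sup>2 / (4 * (1 + 1 / k) * \<sigma>2))"
    using \<open>c > 0\<close> assms unfolding B_def t_def c_def[symmetric]
    by (simp add: power_mult_distrib field_simps power2_eq_square flip: exp_add)
  finally show ?thesis
    by (simp add: emeasure_eq_measure)
qed

end
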